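(* For a two-player game with two strategies $A,B$ per player and real payoff matrices $G_1=\begin{bmatrix}g_1^{AA}&g_1^{AB}\\ g_1^{BA}&g_1^{BB}\end{bmatrix}$, $G_2=\begin{bmatrix}g_2^{AA}&g_2^{AB}\\ g_2^{BA}&g_2^{BB}\end{bmatrix}$ (rows: player 1's strategy, columns: player 2's), let $\alpha=\operatorname{sgn}(g_1^{AA}-g_1^{BA})$, $\beta=\operatorname{sgn}(g_1^{AB}-g_1^{BB})$, $\gamma=\operatorname{sgn}(g_2^{AA}-g_2^{AB})$, $\delta=\operatorname{sgn}(g_2^{BA}-g_2^{BB})$ (with $\operatorname{sgn}(0)=0$), and define the map \[ \Phi(G_1,G_2)=\left(\begin{bmatrix}\alpha&\beta\\-\alpha&-\beta\end{bmatrix},\ \begin{bmatrix}\gamma&-\gamma\\ \delta&-\delta\end{bmatrix}\right). \] Then: (i) the image of $\Phi$ over all real $2\times2$ games is the set $\mathcal{F}$ of the $3^4=81$ games obtained for $(\alpha,\beta,\gamma,\delta)\in\{-1,0,1\}^4$; (ii) $\Phi$ preserves best responses: for every game, each player $p$ and each strategy of the opponent, player $p$'s (weak) preference between its own two strategies, i.e. the sign of the difference of its two payoffs, is the same in $(G_1,G_2)$ and in $\Phi(G_1,G_2)$; (iii) under the equivalence relation on $\mathcal{F}$ generated by permuting player 1's two strategies, permuting player 2's two strategies, and permuting the players (replacing $(G_1,G_2)$ by $(G'_1,G'_2)$ with $G'_1(a_1,a_2)=G_2(a_2,a_1)$, $G'_2(a_1,a_2)=G_1(a_2,a_1)$), $\mathcal{F}$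 splits into exactly 15 equivalence classes: 11 consisting of games in which neither player's payoff is identically zero, 3 consisting of games in which exactly one player's payoff is identically zero, and 1 consisting of the game in which both payoffs are identically zero.
   Context: Strategy permutations and player permutation map games of the form in $\mathcal{F}$ to games of the same form, so the equivalence relation in (iii) is a relation on $\mathcal{F}$. *)

theory Defs
  imports Main "HOL.Real"
begin

datatype strat = A | B

text \<open>A two-player 2x2 game: payoff functions G1, G2 indexed by
  (strategy of player 1, strategy of player 2).\<close>
type_synonym game = "(strat \<Rightarrow> strat \<Rightarrow> real) \<times> (strat \<Rightarrow> strat \<Rightarrow> real)"

definition sign_game :: "real \<Rightarrow> real \<Rightarrow> real \<Rightarrow> real \<Rightarrow> game" where
  "sign_game \<alpha> \<beta> \<gamma> \<delta> =
     ((\<lambda>a1 a2. case (a1, a2) of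
         (A, A) \<Rightarrow> \<alpha> | (A, B) \<Rightarrow> \<beta> | (B, A) \<Rightarrow> - \<alpha> | (B, B) \<Rightarrow> - \<beta>),
      (\<lambda>a1 a2. case (a1, a2) of
         (A, A) \<Rightarrow> \<gamma> | (A, B) \<Rightarrow> - \<gamma> | (B, A) \<Rightarrow> \<delta> | (B, B) \<Rightarrow> - \<delta>))"

definition Phi :: "game \<Rightarrow> game" where
  "Phi G = (let G1 = fst G; G2 = snd G in
     sign_game (sgn (G1 A A - G1 B A)) (sgn (G1 A B - G1 B B))
               (sgn (G2 A A - G2 A B)) (sgn (G2 B A - G2 B B)))"

definition F :: "game set" where
  "F = {sign_game \<alpha> \<beta> \<gamma> \<delta> | \<alpha> \<beta> \<gamma> \<delta>.
          \<alpha> \<in> {-1, 0, 1} \<and> \<beta> \<in> {-1, 0, 1} \<and> \<gamma> \<in> {-1, 0, 1} \<and> \<delta> \<in> {-1, 0, 1}}"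

definition swap_strat :: "strat \<Rightarrow> strat" where
  "swap_strat s = (case s of A \<Rightarrow> B | B \<Rightarrow> A)"

definition perm1 :: "game \<Rightarrow> game" where
  "perm1 G = ((\<lambda>a1 a2. fst G (swap_strat a1) a2), (\<lambda>a1 a2. snd G (swap_strat a1) a2))"

definition perm2 :: "game \<Rightarrow> game" where
  "perm2 G = ((\<lambda>a1 a2. fst G a1 (swap_strat a2)), (\<lambda>a1 a2. snd G a1 (swap_strat a2)))"

definition perm_players :: "game \<Rightarrow> game" where
  "perm_players G = ((\<lambda>a1 a2. snd G a2 a1), (\<lambda>a1 a2. fst G a2 a1))"

definition step_rel :: "game rel" where
  "step_rel = {(G, H). G \<in> F \<and> (H = perm1 G \<or> H = perm2 G \<or> H = perm_players G)}"

definition equivF :: "game rel" where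
  "equivF = (step_rel \<union> step_rel\<inverse>)\<^sup>* \<inter> (F \<times> F)"

definition zero_payoff :: "strat \<Rightarrow> strat \<Rightarrow> real" where
  "zero_payoff = (\<lambda>_ _. 0)"

end

theory Submission
  imports Defs
begin

text \<open>\<Phi> keeps only the sign of each payoff difference that decides a best response,
  so it preserves best responses and fixes every game of \<open>F\<close>; hence its range is \<open>F\<close>.
  The games of \<open>F\<close> are parametrised injectively by sign vectors
  \<open>(\<alpha>, \<beta>, \<gamma>, \<delta>) \<in> {-1, 0, 1}\<^sup>4\<close>, on which the three symmetries act by
  \<open>(-\<alpha>, -\<beta>, \<delta>, \<gamma>)\<close>, \<open>(\<beta>, \<alpha>, -\<gamma>, -\<delta>)\<close> and \<open>(\<gamma>, \<delta>, \<alpha>, \<beta>)\<close>.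
  The first two commute and are conjugate under the third, so together they generate a
  dihedral group of order 8; the equivalence classes are the images of its orbits, and the
  15 orbits are counted by evaluation.\<close>

datatype sign = Neg | Zero | Pos

lemma UNIV_sign: "UNIV = {Neg, Zero, Pos}"
  using sign.exhaust by auto

fun of_sign :: "sign \<Rightarrow> real" where
  "of_sign Neg = -1"
| "of_sign Zero = 0"
| "of_sign Pos = 1"

fun neg_sign :: "sign \<Rightarrow> sign" where
  "neg_sign Neg = Pos"
| "neg_sign Zero = Zero"
| "neg_sign Pos = Neg"

lemma of_sign_neg_sign [simp]: "of_sign (neg_sign s) = - of_sign s"
  by (cases s) auto

lemma neg_sign_neg_sign [simp]: "neg_sign (neg_sign s) = s"
  by (cases s) auto

lemma of_sign_eq_iff: "of_sign s = of_sign s' \<longleftrightarrow> s = s'"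
  by (cases s; cases s') auto

lemma of_sign_eq_0_iff: "of_sign s = 0 \<longleftrightarrow> s = Zero"
  by (cases s) auto

lemma range_of_sign: "range of_sign = {-1, 0, 1}"
  using of_sign.simps by (auto simp: UNIV_sign)

lemma sgn_double_of_sign [simp]: "sgn (2 * of_sign s) = of_sign s"
  by (cases s) auto

lemma sgn_real_cases: "sgn (x :: real) \<in> {-1, 0, 1}"
  by (simp add: sgn_if)

lemma sgn_double_sgn: "sgn (2 * sgn x) = sgn (x :: real)"
  by (auto simp: sgn_if)

type_synonym sign_params = "sign \<times> sign \<times> sign \<times> sign"

text \<open>\<open>code_simp\<close> cannot enumerate \<open>UNIV\<close> itself, only this explicit product.\<close>
lemma UNIV_sign_params:
  "(UNIV :: sign_params set) =
     {Neg, Zero, Pos} \<times> {Neg, Zero, Pos} \<times> {Neg, Zero, Pos} \<times> {Neg, Zero, Pos}"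
  by (simp add: UNIV_sign flip: UNIV_Times_UNIV)

fun param_game :: "sign_params \<Rightarrow> game" where
  "param_game (a, b, c, d) = sign_game (of_sign a) (of_sign b) (of_sign c) (of_sign d)"

lemma param_game_in_F: "param_game t \<in> F"
proof (cases t)
  case (fields a b c d)
  have "sign_game (of_sign a) (of_sign b) (of_sign c) (of_sign d) \<in> F"
    unfolding F_def range_of_sign[symmetric] by blast
  then show ?thesis
    using fields by simp
qed

lemma F_eq_range_param_game: "F = range param_game"
proof
  show "F \<subseteq> range param_game"
  proof
    fix G
    assume "G \<in> F"
    then obtain a b c d where "G = sign_game (of_sign a) (of_sign b) (of_sign c) (of_sign d)"
      unfolding F_def range_of_sign[symmetric] by blast
    then have "G = param_game (a, b, c, d)"
      by simp
    then show "G \<in> range param_game"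
      by blast
  qed
  show "range param_game \<subseteq> F"
    using param_game_in_F by blast
qed

lemma inj_param_game: "inj param_game"
proof (rule injI)
  fix t u :: sign_params
  assume eq: "param_game t = param_game u"
  obtain a b c d a' b' c' d' where t: "t = (a, b, c, d)" and u: "u = (a', b', c', d')"
    by (cases t, cases u) auto
  have "fst (param_game t) A A = fst (param_game u) A A"
    "fst (param_game t) A B = fst (param_game u) A B"
    "snd (param_game t) A A = snd (param_game u) A A"
    "snd (param_game t) B A = snd (param_game u) B A"
    using eq by simp_all
  then show "t = u"
    by (simp add: t u sign_game_def of_sign_eq_iff)
qed

lemma card_F: "card F = 81"
proof -
  have "card (UNIV :: sign_params set) = 81"
    unfolding UNIV_sign_params by simp
  then show ?thesis
    unfolding F_eq_range_param_game using card_image[OF inj_param_game] by simp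
qed

lemma Phi_param_game: "Phi (param_game t) = param_game t"
  by (cases t) (simp add: Phi_def sign_game_def fun_eq_iff split: strat.split)

lemma range_Phi: "range Phi = F"
proof
  show "range Phi \<subseteq> F"
    unfolding F_def Phi_def Let_def using sgn_real_cases by blast
  show "F \<subseteq> range Phi"
    unfolding F_eq_range_param_game by (metis Phi_param_game rangeI image_subsetI)
qed

lemma sgn_payoff_diff_Phi:
  "sgn (fst G A b - fst G B b) = sgn (fst (Phi G) A b - fst (Phi G) B b)"
  "sgn (snd G b A - snd G b B) = sgn (snd (Phi G) b A - snd (Phi G) b B)"
  by (cases b; simp add: Phi_def Let_def sign_game_def sgn_double_sgn)+

fun payoff1_zero :: "sign_params \<Rightarrow> bool" where
  "payoff1_zero (a, b, _, _) \<longleftrightarrow> a = Zero \<and> b = Zero"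

fun payoff2_zero :: "sign_params \<Rightarrow> bool" where
  "payoff2_zero (_, _, c, d) \<longleftrightarrow> c = Zero \<and> d = Zero"

lemma fst_param_game_eq_zero_iff: "fst (param_game t) = zero_payoff \<longleftrightarrow> payoff1_zero t"
  by (cases t) (auto simp: zero_payoff_def sign_game_def fun_eq_iff of_sign_eq_0_iff
      split: strat.split)

lemma snd_param_game_eq_zero_iff: "snd (param_game t) = zero_payoff \<longleftrightarrow> payoff2_zero t"
  by (cases t) (auto simp: zero_payoff_def sign_game_def fun_eq_iff of_sign_eq_0_iff
      split: strat.split)

fun swap1_params :: "sign_params \<Rightarrow> sign_params" where
  "swap1_params (a, b, c, d) = (neg_sign a, neg_sign b, d, c)"

fun swap2_params :: "sign_params \<Rightarrow> sign_params" where
  "swap2_params (a, b, c, d) = (b, a, neg_sign c, neg_sign d)"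

fun swap_players_params :: "sign_params \<Rightarrow> sign_params" where
  "swap_players_params (a, b, c, d) = (c, d, a, b)"

lemma perm1_param_game: "perm1 (param_game t) = param_game (swap1_params t)"
  by (cases t) (auto simp: perm1_def sign_game_def swap_strat_def fun_eq_iff split: strat.split)

lemma perm2_param_game: "perm2 (param_game t) = param_game (swap2_params t)"
  by (cases t) (auto simp: perm2_def sign_game_def swap_strat_def fun_eq_iff split: strat.split)

lemma perm_players_param_game: "perm_players (param_game t) = param_game (swap_players_params t)"
  by (cases t) (auto simp: perm_players_def sign_game_def fun_eq_iff split: strat.split)

lemma swap_params_involutive [simp]:
  "swap1_params (swap1_params t) = t"
  "swap2_params (swap2_params t) = t"
  "swap_players_params (swap_players_params t) = t"
  by (cases t; simp)+

lemma swap_params_commute [simp]: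
  "swap2_params (swap1_params t) = swap1_params (swap2_params t)"
  "swap_players_params (swap1_params t) = swap2_params (swap_players_params t)"
  "swap_players_params (swap2_params t) = swap1_params (swap_players_params t)"
  by (cases t; simp)+

definition param_orbit :: "sign_params \<Rightarrow> sign_params set" where
  "param_orbit t =
     {t, swap1_params t, swap2_params t, swap1_params (swap2_params t),
      swap_players_params t, swap1_params (swap_players_params t),
      swap2_params (swap_players_params t), swap1_params (swap2_params (swap_players_params t))}"

lemma self_in_param_orbit: "t \<in> param_orbit t"
  by (simp add: param_orbit_def)

lemma param_orbit_closed:
  assumes "u \<in> param_orbit t"
  shows "swap1_params u \<in> param_orbit t" "swap2_params u \<in> param_orbit t"
    "swap_players_params u \<in> param_orbit t"
  using assms by (auto simp: param_orbit_def)

abbreviation step_equiv_closure :: "game rel" where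
  "step_equiv_closure \<equiv> (step_rel \<union> step_rel\<inverse>)\<^sup>*"

lemma step_rel_param_game:
  "(param_game t, param_game (swap1_params t)) \<in> step_rel"
  "(param_game t, param_game (swap2_params t)) \<in> step_rel"
  "(param_game t, param_game (swap_players_params t)) \<in> step_rel"
  by (auto simp: step_rel_def F_eq_range_param_game perm1_param_game perm2_param_game
      perm_players_param_game)

lemma step_from_param_game:
  assumes "(param_game t, H) \<in> step_rel \<union> step_rel\<inverse>"
  shows "\<exists>u \<in> {swap1_params t, swap2_params t, swap_players_params t}. H = param_game u"
  using assms
proof
  assume "(param_game t, H) \<in> step_rel"
  then show ?thesis
    by (auto simp: step_rel_def perm1_param_game perm2_param_game perm_players_param_game)
next
  assume "(param_game t, H) \<in> step_rel\<inverse>"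
  then obtain u where H: "H = param_game u" and
    "param_game t \<in> {perm1 H, perm2 H, perm_players H}"
    by (auto simp: step_rel_def F_eq_range_param_game)
  then have "t \<in> {swap1_params u, swap2_params u, swap_players_params u}"
    using inj_param_game
    by (auto simp: perm1_param_game perm2_param_game perm_players_param_game inj_eq)
  then show ?thesis
    using H by auto
qed

lemma step_equiv_closure_param_game_iff:
  "(param_game t, H) \<in> step_equiv_closure \<longleftrightarrow> H \<in> param_game ` param_orbit t"
proof
  assume "(param_game t, H) \<in> step_equiv_closure"
  then show "H \<in> param_game ` param_orbit t"
  proof (induction rule: rtrancl_induct)
    case base
    then show ?case
      using self_in_param_orbit by blast
  next
    case (step H K)
    then obtain u where u: "u \<in> param_orbit t" and H: "H = param_game u"
      by blast
    obtain v where "v \<in> {swap1_params u, swap2_params u, swap_players_params u}"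
      and "K = param_game v"
      using step_from_param_game[of u K] step.hyps(2) unfolding H by blast
    then show ?case
      using param_orbit_closed[OF u] by blast
  qed
next
  have reach:
    "(param_game t, param_game (swap1_params u)) \<in> step_equiv_closure"
    "(param_game t, param_game (swap2_params u)) \<in> step_equiv_closure"
    "(param_game t, param_game (swap_players_params u)) \<in> step_equiv_closure"
    if "(param_game t, param_game u) \<in> step_equiv_closure" for u
    using that step_rel_param_game[of u] by (auto intro: rtrancl_into_rtrancl)
  assume "H \<in> param_game ` param_orbit t"
  then show "(param_game t, H) \<in> step_equiv_closure"
    unfolding param_orbit_def by (auto intro!: reach)
qed

lemma equivF_Image_param_game: "equivF `` {param_game t} = param_game ` param_orbit t"
proof (rule set_eqI)
  fix H
  have "param_game t \<in> F" "param_game ` param_orbit t \<subseteq> F"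
    using param_game_in_F by blast+
  then show "H \<in> equivF `` {param_game t} \<longleftrightarrow> H \<in> param_game ` param_orbit t"
    unfolding equivF_def using step_equiv_closure_param_game_iff[of t H] by blast
qed

lemma equiv_F_equivF: "equiv F equivF"
proof -
  have "sym step_equiv_closure"
    by (simp add: sym_rtrancl sym_Un_converse)
  then show ?thesis
    unfolding equiv_def refl_on_def sym_def trans_def equivF_def
    by (auto intro: rtrancl_trans)
qed

lemma quotient_F_equivF: "F // equivF = image param_game ` range param_orbit"
  unfolding quotient_def F_eq_range_param_game using equivF_Image_param_game by auto

lemma card_image_param_game: "card (image param_game ` X) = card X"
  by (rule card_image) (meson inj_on_image inj_on_subset inj_param_game subset_UNIV)

lemma filter_quotient_F_equivF:
  "{C \<in> F // equivF. P C} = image param_game ` {C \<in> range param_orbit. P (param_game ` C)}"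
  unfolding quotient_F_equivF by auto

lemma card_range_param_orbit: "card (range param_orbit) = 15"
  unfolding UNIV_sign_params by code_simp

lemma card_param_orbits_without_zero_payoff:
  "card {C \<in> range param_orbit. \<forall>u\<in>C. \<not> payoff1_zero u \<and> \<not> payoff2_zero u} = 11"
  unfolding UNIV_sign_params by code_simp

lemma card_param_orbits_with_one_zero_payoff:
  "card {C \<in> range param_orbit. \<forall>u\<in>C. payoff1_zero u \<noteq> payoff2_zero u} = 3"
  unfolding UNIV_sign_params by code_simp

lemma param_orbits_with_both_zero_payoffs:
  "{C \<in> range param_orbit. \<forall>u\<in>C. payoff1_zero u \<and> payoff2_zero u} = {{(Zero, Zero, Zero, Zero)}}"
  unfolding UNIV_sign_params by code_simp

lemma param_game_zero: "param_game (Zero, Zero, Zero, Zero) = (zero_payoff, zero_payoff)"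
  by (auto simp: zero_payoff_def sign_game_def fun_eq_iff split: strat.split)

theorem mainTheorem6:
  shows "(range Phi = F \<and> card F = 81)
    \<and> (\<forall>G b. sgn (fst G A b - fst G B b) = sgn (fst (Phi G) A b - fst (Phi G) B b)
             \<and> sgn (snd G b A - snd G b B) = sgn (snd (Phi G) b A - snd (Phi G) b B))
    \<and> equiv F equivF
    \<and> card (F // equivF) = 15
    \<and> card {C \<in> F // equivF. \<forall>G\<in>C. fst G \<noteq> zero_payoff \<and> snd G \<noteq> zero_payoff} = 11
    \<and> card {C \<in> F // equivF. \<forall>G\<in>C. (fst G = zero_payoff) \<noteq> (snd G = zero_payoff)} = 3
    \<and> {C \<in> F // equivF. \<forall>G\<in>C. fst G = zero_payoff \<and> snd G = zero_payoff}
           = {{(zero_payoff, zero_payoff)}}"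
proof (intro conjI allI)
  show "range Phi = F"
    by (rule range_Phi)
  show "card F = 81"
    by (rule card_F)
  show "sgn (fst G A b - fst G B b) = sgn (fst (Phi G) A b - fst (Phi G) B b)"
    "sgn (snd G b A - snd G b B) = sgn (snd (Phi G) b A - snd (Phi G) b B)" for G b
    by (rule sgn_payoff_diff_Phi)+
  show "equiv F equivF"
    by (rule equiv_F_equivF)
  show "card (F // equivF) = 15"
    using card_range_param_orbit by (simp add: quotient_F_equivF card_image_param_game)
  show "card {C \<in> F // equivF. \<forall>G\<in>C. fst G \<noteq> zero_payoff \<and> snd G \<noteq> zero_payoff} = 11"
    using card_param_orbits_without_zero_payoff
    by (simp add: filter_quotient_F_equivF card_image_param_game fst_param_game_eq_zero_iff
        snd_param_game_eq_zero_iff)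
  show "card {C \<in> F // equivF. \<forall>G\<in>C. (fst G = zero_payoff) \<noteq> (snd G = zero_payoff)} = 3"
    using card_param_orbits_with_one_zero_payoff
    by (simp add: filter_quotient_F_equivF card_image_param_game fst_param_game_eq_zero_iff
        snd_param_game_eq_zero_iff)
  show "{C \<in> F // equivF. \<forall>G\<in>C. fst G = zero_payoff \<and> snd G = zero_payoff}
      = {{(zero_payoff, zero_payoff)}}"
    using param_orbits_with_both_zero_payoffs param_game_zero
    by (simp add: filter_quotient_F_equivF fst_param_game_eq_zero_iff snd_param_game_eq_zero_iff)
qed

end
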